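(* Let $H$ be a real Hilbert space, $A:H\to2^H$ a maximal monotone operator with $\mathrm{zer}A\ne\emptyset$, $(\gamma_n)$ a sequence in $(0,\infty)$, $x_0\in H$ and $x_{n+1}=J_{\gamma_nA}x_n$. Then: (i) for all $n\in\mathbb{N}$, $m\ge1$ and $p\in H$, $\|x_{n+m}-p\|\le\|x_n-p\|+\sum_{i=n}^{n+m-1}\|p-J_{\gamma_iA}p\|$; (ii) $(x_n)$ is uniformly Fej\'er monotone w.r.t. $\mathrm{zer}A$ with modulus $\chi(n,m,r)=\max\{n+m-1,m(r+1)\}$, i.e. for all $r,n,m\in\mathbb{N}$ and all $p\in AF_{\chi(n,m,r)}$, $\|x_{n+l}-p\|<\|x_n-p\|+\frac1{r+1}$ for all $l\le m$.
   Context: $J_{\gamma A}:=(Id+\gamma A)^{-1}$ is the resolvent of $\gamma A$ (single-valued, defined on $H$). $AF_k:=\bigcap_{i\le k}\{x\in H\mid\|x-J_{\gamma_iA}x\|\le\frac1{k+1}\}$, so that $\mathrm{zer}A=\bigcap_kAF_k$. *)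

theory Defs
  imports "HOL-Analysis.Analysis"
begin

definition monotone_op :: "('a::real_inner \<Rightarrow> 'a set) \<Rightarrow> bool" where
  "monotone_op A \<longleftrightarrow>
     (\<forall>x y u v. u \<in> A x \<longrightarrow> v \<in> A y \<longrightarrow> 0 \<le> (x - y) \<bullet> (u - v))"

definition maximal_monotone :: "('a::real_inner \<Rightarrow> 'a set) \<Rightarrow> bool" where
  "maximal_monotone A \<longleftrightarrow> monotone_op A \<and>
     (\<forall>B. monotone_op B \<and> (\<forall>x. A x \<subseteq> B x) \<longrightarrow> B = A)"

definition zer :: "('a::real_vector \<Rightarrow> 'a set) \<Rightarrow> 'a set" where
  "zer A = {x. 0 \<in> A x}"

text \<open>Resolvent J_{\<gamma>A} = (Id + \<gamma>A)^{-1}: J_{\<gamma>A} x is the (unique) y with x \<in> y + \<gamma> A y.\<close>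
definition resolvent :: "real \<Rightarrow> ('a::real_vector \<Rightarrow> 'a set) \<Rightarrow> 'a \<Rightarrow> 'a" where
  "resolvent \<gamma> A x = (THE y. \<exists>u \<in> A y. x = y + \<gamma> *\<^sub>R u)"

definition AF :: "(nat \<Rightarrow> real) \<Rightarrow> ('a::real_normed_vector \<Rightarrow> 'a set) \<Rightarrow> nat \<Rightarrow> 'a set" where
  "AF \<gamma> A k = (\<Inter>i\<in>{..k}. {x. norm (x - resolvent (\<gamma> i) A x) \<le> 1 / (real k + 1)})"

definition chi :: "nat \<Rightarrow> nat \<Rightarrow> nat \<Rightarrow> nat" where
  "chi n m r = max (n + m - 1) (m * (r + 1))"

end

(*
  Estimate (i) only needs every resolvent J = J_{gamma A} to be nonexpansive: then
  |J a - p| <= |J a - J p| + |J p - p| <= |a - p| + |p - J p|, and one sums along the orbit.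
  Estimate (ii) follows from (i): a point of AF_k is moved by at most 1/(k+1) by each of the
  first k+1 resolvents, and for k = chi n m r >= m (r + 1) the sum of l <= m such displacements
  is below 1/(r+1).

  The real work is that J is defined on all of H (Minty's theorem): the resolvent is given by a
  definite description, so without surjectivity of Id + gamma A nothing could be said about it.
  Minty's theorem follows from the Debrunner-Flor lemma in the following form: for a monotone set
  G of pairs there is y with (y, -y) monotonically related to every (x, u) in G, i.e. y lies in
  all the balls with centre (x - u)/2 and radius |(x + u)/2|.  For finitely many balls, minimise
  the largest excess |y - c|^2 - r^2 over the convex hull of the centres: the minimiser is a convex
  combination of the active centres, and averaging the monotonicity inequalities over these shows
  that the excess is not positive.  For infinitely many balls, weak compactness is replaced by a
  minimal-norm argument: near-minimisers of the norm on the finite intersections form a Cauchy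
  sequence by the parallelogram law, and its limit lies in every ball.
*)
theory Submission
  imports Defs
begin

definition monotone_set :: "('a::real_inner \<times> 'a) set \<Rightarrow> bool" where
  "monotone_set G \<longleftrightarrow> (\<forall>s\<in>G. \<forall>t\<in>G. 0 \<le> (fst s - fst t) \<bullet> (snd s - snd t))"

definition minty_center :: "'a::real_vector \<times> 'a \<Rightarrow> 'a" where
  "minty_center s = (1/2) *\<^sub>R (fst s - snd s)"

definition minty_radius :: "'a::real_normed_vector \<times> 'a \<Rightarrow> real" where
  "minty_radius s = norm ((1/2) *\<^sub>R (fst s + snd s))"

lemma inner_minty_eq:
  "(fst s - y) \<bullet> (snd s + y) = (minty_radius s)\<^sup>2 - (norm (y - minty_center s))\<^sup>2"
  unfolding minty_radius_def minty_center_def power2_norm_eq_inner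
  by (simp add: inner_commute algebra_simps)

lemma mem_minty_cball_iff:
  "y \<in> cball (minty_center s) (minty_radius s) \<longleftrightarrow> 0 \<le> (fst s - y) \<bullet> (snd s + y)"
proof -
  have "dist (minty_center s) y \<le> minty_radius s \<longleftrightarrow> (norm (y - minty_center s))\<^sup>2 \<le> (minty_radius s)\<^sup>2"
    by (simp add: dist_norm norm_minus_commute minty_radius_def power2_le_iff_abs_le)
  then show ?thesis
    by (simp add: inner_minty_eq)
qed

lemma monotone_set_subset: "monotone_set G \<Longrightarrow> F \<subseteq> G \<Longrightarrow> monotone_set F"
  unfolding monotone_set_def by blast

section \<open>The Debrunner-Flor lemma for finitely many pairs\<close>

lemma monotone_convex_combination_inner_le:
  fixes P Q :: "'i \<Rightarrow> 'a::real_inner"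
  assumes "finite V" and \<mu>_nonneg: "\<forall>v\<in>V. 0 \<le> \<mu> v" and \<mu>_sum: "sum \<mu> V = 1"
    and mono: "\<forall>v\<in>V. \<forall>w\<in>V. 0 \<le> (P v - P w) \<bullet> (Q v - Q w)"
  shows "(\<Sum>v\<in>V. \<mu> v *\<^sub>R P v) \<bullet> (\<Sum>v\<in>V. \<mu> v *\<^sub>R Q v) \<le> (\<Sum>v\<in>V. \<mu> v * (P v \<bullet> Q v))"
proof -
  define d where "d = (\<Sum>v\<in>V. \<mu> v * (P v \<bullet> Q v))"
  define c where "c = (\<Sum>v\<in>V. \<mu> v *\<^sub>R P v) \<bullet> (\<Sum>v\<in>V. \<mu> v *\<^sub>R Q v)"
  have diag: "(\<Sum>v\<in>V. \<Sum>w\<in>V. \<mu> v * \<mu> w * (P v \<bullet> Q v)) = d"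
    by (simp add: d_def sum_distrib_left[symmetric] sum_distrib_right[symmetric] \<mu>_sum mult.commute mult.left_commute)
  have diag': "(\<Sum>v\<in>V. \<Sum>w\<in>V. \<mu> v * \<mu> w * (P w \<bullet> Q w)) = d"
    by (subst sum.swap) (simp add: d_def sum_distrib_left[symmetric] sum_distrib_right[symmetric] \<mu>_sum mult.commute mult.left_commute)
  have cross: "(\<Sum>v\<in>V. \<Sum>w\<in>V. \<mu> v * \<mu> w * (P v \<bullet> Q w)) = c"
    by (simp add: c_def inner_sum_left inner_sum_right sum_distrib_left mult.assoc, subst sum.swap)
      (simp add: mult.commute mult.left_commute)
  have cross': "(\<Sum>v\<in>V. \<Sum>w\<in>V. \<mu> v * \<mu> w * (P w \<bullet> Q v)) = c"
    by (simp add: c_def inner_sum_left inner_sum_right sum_distrib_left mult.assoc)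
  have "0 \<le> (\<Sum>v\<in>V. \<Sum>w\<in>V. \<mu> v * \<mu> w * ((P v - P w) \<bullet> (Q v - Q w)))"
    using \<mu>_nonneg mono by (intro sum_nonneg) auto
  also have "\<dots> = (\<Sum>v\<in>V. \<Sum>w\<in>V. \<mu> v * \<mu> w * (P v \<bullet> Q v))
      + (\<Sum>v\<in>V. \<Sum>w\<in>V. \<mu> v * \<mu> w * (P w \<bullet> Q w))
      - (\<Sum>v\<in>V. \<Sum>w\<in>V. \<mu> v * \<mu> w * (P v \<bullet> Q w))
      - (\<Sum>v\<in>V. \<Sum>w\<in>V. \<mu> v * \<mu> w * (P w \<bullet> Q v))"
    by (simp add: inner_diff_left inner_diff_right algebra_simps sum.distrib sum_subtractf)
  finally show ?thesis
    unfolding diag diag' cross cross' by (simp add: c_def d_def)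
qed

lemma monotone_set_convex_combination_gap_nonneg:
  fixes V :: "('a::real_inner \<times> 'a) set"
  assumes "finite V" "monotone_set V" and \<mu>_nonneg: "\<forall>s\<in>V. 0 \<le> \<mu> s" and \<mu>_sum: "sum \<mu> V = 1"
  defines "y \<equiv> \<Sum>s\<in>V. \<mu> s *\<^sub>R minty_center s"
  shows "0 \<le> (\<Sum>s\<in>V. \<mu> s * ((fst s - y) \<bullet> (snd s + y)))"
proof -
  define a where "a = (\<Sum>s\<in>V. \<mu> s *\<^sub>R fst s)"
  define b where "b = (\<Sum>s\<in>V. \<mu> s *\<^sub>R snd s)"
  have y: "y = (1/2) *\<^sub>R (a - b)"
    by (simp add: y_def a_def b_def minty_center_def scaleR_sum_right sum_subtractf algebra_simps)
  have ab: "a \<bullet> b \<le> (\<Sum>s\<in>V. \<mu> s * (fst s \<bullet> snd s))"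
    unfolding a_def b_def
    by (rule monotone_convex_combination_inner_le) (use assms in \<open>auto simp: monotone_set_def\<close>)
  have "(\<Sum>s\<in>V. \<mu> s * ((fst s - y) \<bullet> (snd s + y)))
      = (\<Sum>s\<in>V. \<mu> s * (fst s \<bullet> snd s)) + (a - b) \<bullet> y - y \<bullet> y"
    using \<mu>_sum
    by (simp add: a_def b_def inner_diff_left inner_add_right inner_sum_left inner_sum_right algebra_simps
        sum.distrib sum_subtractf sum_distrib_right[symmetric] inner_commute)
  also have "\<dots> \<ge> a \<bullet> b + (a - b) \<bullet> y - y \<bullet> y"
    using ab by simp
  also have "a \<bullet> b + (a - b) \<bullet> y - y \<bullet> y = (norm ((1/2) *\<^sub>R (a + b)))\<^sup>2"
    unfolding y power2_norm_eq_inner by (simp add: algebra_simps inner_commute)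
  finally show ?thesis
    by (rule order_trans[OF zero_le_power2])
qed

lemma mem_convex_hull_finite_image:
  fixes f :: "'i \<Rightarrow> 'a::real_vector"
  assumes "finite I" "y \<in> convex hull (f ` I)"
  obtains \<mu> where "\<forall>i\<in>I. 0 \<le> \<mu> i" "sum \<mu> I = 1" "y = (\<Sum>i\<in>I. \<mu> i *\<^sub>R f i)"
proof -
  obtain u where u_nonneg: "\<forall>v\<in>f ` I. 0 \<le> u v" and u_sum: "sum u (f ` I) = 1"
    and y: "(\<Sum>v\<in>f ` I. u v *\<^sub>R v) = y"
    using assms convex_hull_finite[of "f ` I"] by auto
  define n where "n v = real (card {j\<in>I. f j = v})" for v
  define \<mu> where "\<mu> i = u (f i) / n (f i)" for i
  have fibre: "(\<Sum>j\<in>{j\<in>I. f j = v}. \<mu> j *\<^sub>R g (f j)) = u v *\<^sub>R g v"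
    if "v \<in> f ` I" for v and g :: "'a \<Rightarrow> 'b::real_vector"
  proof -
    have "n v \<noteq> 0"
      using that assms(1) by (auto simp: n_def)
    have "(\<Sum>j\<in>{j\<in>I. f j = v}. \<mu> j *\<^sub>R g (f j)) = (\<Sum>j\<in>{j\<in>I. f j = v}. (u v / n v) *\<^sub>R g v)"
      by (intro sum.cong) (auto simp: \<mu>_def)
    also have "\<dots> = n v *\<^sub>R ((u v / n v) *\<^sub>R g v)"
      unfolding sum_constant_scaleR n_def by simp
    finally show ?thesis
      using \<open>n v \<noteq> 0\<close> by simp
  qed
  have "(\<Sum>i\<in>I. \<mu> i *\<^sub>R f i) = (\<Sum>v\<in>f ` I. u v *\<^sub>R v)"
    using fibre[of _ id] by (simp add: sum.image_gen[OF assms(1), of "\<lambda>i. \<mu> i *\<^sub>R f i" f])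
  moreover have "sum \<mu> I = sum u (f ` I)"
    using fibre[of _ "\<lambda>_. 1::real"] by (simp add: sum.image_gen[OF assms(1), of \<mu> f])
  moreover have "\<forall>i\<in>I. 0 \<le> \<mu> i"
    using u_nonneg by (simp add: \<mu>_def n_def)
  ultimately show ?thesis
    using that u_sum y by simp
qed

lemma continuous_on_Max:
  fixes f :: "'i \<Rightarrow> 'a::topological_space \<Rightarrow> real"
  assumes "finite S" "S \<noteq> {}" "\<And>s. s \<in> S \<Longrightarrow> continuous_on K (f s)"
  shows "continuous_on K (\<lambda>y. Max ((\<lambda>s. f s y) ` S))"
  using assms
proof (induction S rule: finite_ne_induct)
  case (singleton s)
  then show ?case by simp
next
  case (insert s F)
  then have "continuous_on K (\<lambda>y. max (f s y) (Max ((\<lambda>s. f s y) ` F)))"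
    by (intro continuous_on_max) auto
  with insert show ?case
    by simp
qed

lemma power2_norm_add_scaleR_diff:
  "(norm (y + t *\<^sub>R d - c))\<^sup>2 = (norm (y - c))\<^sup>2 + 2 * t * (d \<bullet> (y - c)) + t\<^sup>2 * (norm d)\<^sup>2"
  unfolding power2_norm_eq_inner
  by (simp add: inner_commute algebra_simps power2_eq_square)

lemma norm_diff_decreases_towards_closest_point:
  fixes y p c :: "'a::real_inner"
  assumes "convex L" "closed L" "p \<in> L" "\<forall>k\<in>L. dist y p \<le> dist y k" "c \<in> L"
    and "p \<noteq> y" "0 < t" "t < 1"
  shows "norm (y + t *\<^sub>R (p - y) - c) < norm (y - c)"
proof -
  have "(y - p) \<bullet> (c - p) \<le> 0"
    by (rule any_closest_point_dot) (use assms in \<open>auto simp: dist_commute\<close>)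
  then have "(p - y) \<bullet> (y - c) \<le> - (norm (p - y))\<^sup>2"
    by (simp add: power2_norm_eq_inner algebra_simps inner_commute)
  then have "2 * t * ((p - y) \<bullet> (y - c)) \<le> 2 * t * - (norm (p - y))\<^sup>2"
    using \<open>0 < t\<close> by (intro mult_left_mono) auto
  then have "(norm (y + t *\<^sub>R (p - y) - c))\<^sup>2 \<le> (norm (y - c))\<^sup>2 - t * (2 - t) * (norm (p - y))\<^sup>2"
    unfolding power2_norm_add_scaleR_diff by (simp add: algebra_simps power2_eq_square)
  also have "\<dots> < (norm (y - c))\<^sup>2"
    using assms(6-8) by simp
  finally show ?thesis
    by (rule power2_less_imp_less) simp
qed

lemma Max_sq_dist_minimizer_in_convex_hull_active:
  fixes c :: "'i \<Rightarrow> 'a::real_inner" and \<rho> :: "'i \<Rightarrow> real" and S :: "'i set"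
  defines "q \<equiv> \<lambda>s z. (norm (z - c s))\<^sup>2 - \<rho> s"
  defines "g \<equiv> \<lambda>z. Max ((\<lambda>s. q s z) ` S)"
  assumes S: "finite S" "S \<noteq> {}" and K: "convex K" "c ` S \<subseteq> K"
    and y: "y \<in> K" "\<forall>z\<in>K. g y \<le> g z"
  shows "y \<in> convex hull (c ` {s\<in>S. q s y = g y})"
proof (rule ccontr)
  \<comment> \<open>Otherwise moving from y towards its projection onto the hull of the active centres
     strictly decreases every active term, while the inactive ones stay below the maximum.\<close>
  define I where "I = {s\<in>S. q s y = g y}"
  define L where "L = convex hull (c ` I)"
  assume "y \<notin> convex hull (c ` {s\<in>S. q s y = g y})"
  then have "y \<notin> L"
    by (simp add: L_def I_def)
  have q_le: "q s z \<le> g z" if "s \<in> S" for s z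
    using S that by (simp add: g_def)
  have "g y \<in> (\<lambda>s. q s y) ` S"
    using S unfolding g_def by (intro Max_in) auto
  then have "I \<noteq> {}"
    by (auto simp: I_def)
  moreover have "finite I"
    using S(1) by (simp add: I_def)
  ultimately have "compact L" "L \<noteq> {}"
    by (simp_all add: L_def finite_imp_compact_convex_hull)
  moreover have "continuous_on L (dist y)"
    by (intro continuous_intros)
  ultimately obtain p where "p \<in> L" and p_closest: "\<forall>k\<in>L. dist y p \<le> dist y k"
    using continuous_attains_inf by blast
  have "p \<noteq> y"
    using \<open>p \<in> L\<close> \<open>y \<notin> L\<close> by auto
  have "p \<in> K"
    using \<open>p \<in> L\<close> K hull_minimal[of "c ` I" K convex] by (auto simp: L_def I_def)
  have "\<forall>\<^sub>F t in at_right 0. q s (y + t *\<^sub>R (p - y)) < g y" if "s \<in> S" for s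
  proof (cases "s \<in> I")
    case True
    have "q s (y + t *\<^sub>R (p - y)) < q s y" if "0 < t" "t < 1" for t
      using norm_diff_decreases_towards_closest_point[OF _ _ \<open>p \<in> L\<close> p_closest _ \<open>p \<noteq> y\<close> that]
        True \<open>compact L\<close>
      by (simp add: q_def L_def hull_inc compact_imp_closed power_strict_mono)
    with True show ?thesis
      by (intro eventually_at_rightI[of 0 1]) (auto simp: I_def)
  next
    case False
    then have "q s y < g y"
      using q_le[OF that, of y] that by (auto simp: I_def)
    moreover have "((\<lambda>t. q s (y + t *\<^sub>R (p - y))) \<longlongrightarrow> q s y) (at_right 0)"
      unfolding q_def by (auto intro!: tendsto_eq_intros)
    ultimately show ?thesis
      by (simp add: order_tendstoD(2))
  qed
  then have "\<forall>\<^sub>F t in at_right 0. (\<forall>s\<in>S. q s (y + t *\<^sub>R (p - y)) < g y) \<and> 0 < t \<and> t < 1"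
    using S(1) by (intro eventually_conj eventually_ball_finite eventually_at_rightI[of 0 1]) auto
  then obtain t where t: "\<forall>s\<in>S. q s (y + t *\<^sub>R (p - y)) < g y" "0 < t" "t < 1"
    using eventually_happens'[OF trivial_limit_at_right_real] by blast
  have "y + t *\<^sub>R (p - y) \<in> K"
    using convexD[OF K(1) y(1) \<open>p \<in> K\<close>, of "1 - t" t] t by (simp add: algebra_simps)
  moreover have "g (y + t *\<^sub>R (p - y)) < g y"
    using S t(1) by (simp add: g_def)
  ultimately show False
    using y(2) by fastforce
qed

lemma monotone_set_finite_Inter_minty_cball:
  fixes S :: "('a::real_inner \<times> 'a) set"
  assumes S: "finite S" and mono: "monotone_set S"
  shows "(\<Inter>s\<in>S. cball (minty_center s) (minty_radius s)) \<noteq> {}"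
proof (cases "S = {}")
  case False
  define q where "q s z = (norm (z - minty_center s))\<^sup>2 - (minty_radius s)\<^sup>2" for s :: "'a \<times> 'a" and z
  define g where "g z = Max ((\<lambda>s. q s z) ` S)" for z
  define K where "K = convex hull (minty_center ` S)"
  have "compact K" "K \<noteq> {}"
    using S False by (simp_all add: K_def finite_imp_compact_convex_hull)
  moreover have "continuous_on K g"
    unfolding g_def q_def using S False by (intro continuous_on_Max continuous_intros)
  ultimately obtain y where "y \<in> K" and y_min: "\<forall>z\<in>K. g y \<le> g z"
    using continuous_attains_inf by blast
  have "g y \<le> 0"
  proof (rule ccontr)
    assume "\<not> g y \<le> 0"
    define I where "I = {s\<in>S. q s y = g y}"
    have "finite I" "monotone_set I"
      using S monotone_set_subset[OF mono] by (auto simp: I_def)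
    have "y \<in> convex hull (minty_center ` I)"
      using Max_sq_dist_minimizer_in_convex_hull_active[where c = minty_center
          and \<rho> = "\<lambda>s. (minty_radius s)\<^sup>2" and S = S and K = K] S False \<open>y \<in> K\<close> y_min
      by (simp add: K_def hull_subset q_def g_def I_def)
    then obtain \<mu> where \<mu>: "\<forall>s\<in>I. 0 \<le> \<mu> s" "sum \<mu> I = 1" "y = (\<Sum>s\<in>I. \<mu> s *\<^sub>R minty_center s)"
      using mem_convex_hull_finite_image[OF \<open>finite I\<close>] by blast
    have "0 \<le> (\<Sum>s\<in>I. \<mu> s * ((fst s - y) \<bullet> (snd s + y)))"
      using monotone_set_convex_combination_gap_nonneg[OF \<open>finite I\<close> \<open>monotone_set I\<close> \<mu>(1,2)] \<mu>(3)
      by simp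
    also have "\<dots> = (\<Sum>s\<in>I. \<mu> s * - g y)"
    proof (intro sum.cong refl)
      fix s assume "s \<in> I"
      then have "(fst s - y) \<bullet> (snd s + y) = - g y"
        unfolding inner_minty_eq by (simp add: I_def q_def)
      then show "\<mu> s * ((fst s - y) \<bullet> (snd s + y)) = \<mu> s * - g y"
        by simp
    qed
    also have "\<dots> = - g y"
      using \<mu>(2) by (simp add: sum_negf sum_distrib_right[symmetric])
    finally show False
      using \<open>\<not> g y \<le> 0\<close> by simp
  qed
  have "y \<in> cball (minty_center s) (minty_radius s)" if "s \<in> S" for s
  proof -
    have "q s y \<le> g y"
      using S that by (simp add: g_def)
    with \<open>g y \<le> 0\<close> show ?thesis
      unfolding mem_minty_cball_iff inner_minty_eq by (simp add: q_def)
  qed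
  then show ?thesis
    by blast
qed simp

section \<open>Intersections of closed convex sets in a Hilbert space\<close>

lemma Sup_of_Inf_approximation:
  fixes f :: "'a \<Rightarrow> real" and \<P> :: "'a set set"
  assumes "\<P> \<noteq> {}" "{} \<notin> \<P>" and bounds: "\<And>w. w \<in> \<Union>\<P> \<Longrightarrow> a \<le> f w \<and> f w \<le> b"
  obtains M where "\<And>C \<epsilon>. C \<in> \<P> \<Longrightarrow> 0 < \<epsilon> \<Longrightarrow> \<exists>w\<in>C. f w < M + \<epsilon>"
    and "\<And>\<epsilon>. 0 < \<epsilon> \<Longrightarrow> \<exists>C\<in>\<P>. \<forall>w\<in>C. M - \<epsilon> \<le> f w"
proof
  define m where "m C = Inf (f ` C)" for C
  have bdd_below: "bdd_below (f ` C)" if "C \<in> \<P>" for C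
    using bounds that by (intro bdd_belowI[of _ a]) auto
  have m_le: "m C \<le> f w" if "C \<in> \<P>" "w \<in> C" for C w
    unfolding m_def using that bdd_below by (intro cInf_lower) auto
  have "bdd_above (m ` \<P>)"
  proof (rule bdd_aboveI[of _ b], clarify)
    fix C assume "C \<in> \<P>"
    then obtain w where "w \<in> C"
      using assms(2) by (metis all_not_in_conv)
    then have "f w \<le> b"
      using bounds \<open>C \<in> \<P>\<close> by blast
    then show "m C \<le> b"
      using m_le[OF \<open>C \<in> \<P>\<close> \<open>w \<in> C\<close>] by linarith
  qed
  define M where "M = Sup (m ` \<P>)"
  show "\<exists>w\<in>C. f w < M + \<epsilon>" if "C \<in> \<P>" "0 < \<epsilon>" for C \<epsilon>
  proof -
    have "m C \<le> M"
      unfolding M_def using that \<open>bdd_above (m ` \<P>)\<close> by (intro cSup_upper) auto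
    then have "Inf (f ` C) < M + \<epsilon>"
      using that by (simp add: m_def)
    moreover have "C \<noteq> {}"
      using that assms(2) by blast
    ultimately show ?thesis
      using cInf_less_iff[of "f ` C"] bdd_below[OF \<open>C \<in> \<P>\<close>] by simp
  qed
  show "\<exists>C\<in>\<P>. \<forall>w\<in>C. M - \<epsilon> \<le> f w" if "0 < \<epsilon>" for \<epsilon>
  proof -
    have "M - \<epsilon> < Sup (m ` \<P>)"
      using that by (simp add: M_def)
    then obtain C where "C \<in> \<P>" "M - \<epsilon> < m C"
      using less_cSup_iff[of "m ` \<P>"] assms(1) \<open>bdd_above (m ` \<P>)\<close> by auto
    then have "\<forall>w\<in>C. M - \<epsilon> \<le> f w"
      using m_le[OF \<open>C \<in> \<P>\<close>] by (meson less_imp_le order_trans)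
    with \<open>C \<in> \<P>\<close> show ?thesis
      by blast
  qed
qed

lemma near_minimizers_close:
  fixes C :: "'a::real_inner set"
  assumes "convex C" "y \<in> C" "z \<in> C" and lower: "\<And>w. w \<in> C \<Longrightarrow> M - \<epsilon> \<le> (norm w)\<^sup>2"
    and "(norm y)\<^sup>2 \<le> M + \<epsilon>" "(norm z)\<^sup>2 \<le> M + \<epsilon>"
  shows "norm (y - z) \<le> sqrt (8 * \<epsilon>)"
proof (rule real_le_rsqrt)
  have "(1/2) *\<^sub>R y + (1/2) *\<^sub>R z \<in> C"
    using assms(1-3) by (intro convexD) auto
  then have "M - \<epsilon> \<le> (norm ((1/2) *\<^sub>R (y + z)))\<^sup>2"
    using lower by (simp add: scaleR_add_right)
  moreover have "(norm (y - z))\<^sup>2 = 2 * (norm y)\<^sup>2 + 2 * (norm z)\<^sup>2 - 4 * (norm ((1/2) *\<^sub>R (y + z)))\<^sup>2"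
    unfolding power2_norm_eq_inner by (simp add: algebra_simps inner_commute)
  ultimately show "(norm (y - z))\<^sup>2 \<le> 8 * \<epsilon>"
    using assms(5,6) by linarith
qed

lemma Cauchy_if_norm_diff_le:
  fixes y :: "nat \<Rightarrow> 'a::real_normed_vector"
  assumes bound: "\<And>j k. norm (y j - y k) \<le> \<delta> j + \<delta> k" and "\<delta> \<longlonglongrightarrow> 0"
  shows "Cauchy y"
proof (rule metric_CauchyI)
  fix e :: real assume "0 < e"
  then have "\<forall>\<^sub>F n in sequentially. \<delta> n < e / 2"
    using \<open>\<delta> \<longlonglongrightarrow> 0\<close> by (intro order_tendstoD(2)) auto
  then obtain N where N: "\<forall>n\<ge>N. \<delta> n < e / 2"
    by (auto simp: eventually_sequentially)
  have "dist (y j) (y k) < e" if "N \<le> j" "N \<le> k" for j k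
  proof -
    have "\<delta> j < e / 2" "\<delta> k < e / 2"
      using N that by auto
    then show ?thesis
      unfolding dist_norm using bound[of j k] by linarith
  qed
  then show "\<exists>N. \<forall>j\<ge>N. \<forall>k\<ge>N. dist (y j) (y k) < e"
    by blast
qed

definition near_norm_minimizer :: "real \<Rightarrow> real \<Rightarrow> 'a::real_normed_vector set \<Rightarrow> 'a \<Rightarrow> bool" where
  "near_norm_minimizer M \<epsilon> C y \<longleftrightarrow> y \<in> C \<and> (\<forall>v\<in>C. M - \<epsilon> \<le> (norm v)\<^sup>2) \<and> (norm y)\<^sup>2 \<le> M + \<epsilon>"

lemma directed_convex_family_near_norm_minimizers:
  fixes \<P> :: "'a::real_inner set set"
  assumes "\<P> \<noteq> {}" "{} \<notin> \<P>" and convex: "\<And>C. C \<in> \<P> \<Longrightarrow> convex C"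
    and directed: "\<And>C D. C \<in> \<P> \<Longrightarrow> D \<in> \<P> \<Longrightarrow> \<exists>E\<in>\<P>. E \<subseteq> C \<inter> D"
    and "bounded (\<Union>\<P>)"
  obtains M where "\<And>\<epsilon> C. 0 < \<epsilon> \<Longrightarrow> C \<in> \<P> \<Longrightarrow> \<exists>C'\<in>\<P>. \<exists>w\<in>C. near_norm_minimizer M \<epsilon> C' w"
    and "\<And>\<epsilon> \<epsilon>' C C' y y'. C \<in> \<P> \<Longrightarrow> C' \<in> \<P> \<Longrightarrow> near_norm_minimizer M \<epsilon> C y \<Longrightarrow>
           near_norm_minimizer M \<epsilon>' C' y' \<Longrightarrow> 0 < \<epsilon> \<Longrightarrow> 0 < \<epsilon>' \<Longrightarrow>
           norm (y - y') \<le> sqrt (8 * \<epsilon>) + sqrt (8 * \<epsilon>')"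
proof -
  obtain R where "\<And>w. w \<in> \<Union>\<P> \<Longrightarrow> norm w \<le> R"
    using \<open>bounded (\<Union>\<P>)\<close> by (auto simp: bounded_iff)
  then have norm_sq_bounds: "\<And>w. w \<in> \<Union>\<P> \<Longrightarrow> 0 \<le> (norm w)\<^sup>2 \<and> (norm w)\<^sup>2 \<le> R\<^sup>2"
    by (simp add: power_mono)
  obtain M where above: "\<And>C \<epsilon>. C \<in> \<P> \<Longrightarrow> 0 < \<epsilon> \<Longrightarrow> \<exists>w\<in>C. (norm w)\<^sup>2 < M + \<epsilon>"
    and below: "\<And>\<epsilon>. 0 < \<epsilon> \<Longrightarrow> \<exists>C\<in>\<P>. \<forall>w\<in>C. M - \<epsilon> \<le> (norm w)\<^sup>2"
    using Sup_of_Inf_approximation[where f = "\<lambda>w. (norm w)\<^sup>2" and a = 0 and b = "R\<^sup>2"]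
      assms(1,2) norm_sq_bounds by blast
  show ?thesis
  proof
    fix \<epsilon> :: real and C assume "0 < \<epsilon>" "C \<in> \<P>"
    obtain C' where "C' \<in> \<P>" "\<forall>v\<in>C'. M - \<epsilon> \<le> (norm v)\<^sup>2"
      using below[OF \<open>0 < \<epsilon>\<close>] by blast
    moreover obtain E where "E \<in> \<P>" "E \<subseteq> C \<inter> C'"
      using directed[OF \<open>C \<in> \<P>\<close> \<open>C' \<in> \<P>\<close>] by blast
    moreover obtain w where "w \<in> E" "(norm w)\<^sup>2 < M + \<epsilon>"
      using above[OF \<open>E \<in> \<P>\<close> \<open>0 < \<epsilon>\<close>] by blast
    ultimately show "\<exists>C'\<in>\<P>. \<exists>w\<in>C. near_norm_minimizer M \<epsilon> C' w"
      unfolding near_norm_minimizer_def by (intro bexI[of _ C'] bexI[of _ w]) auto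
  next
    fix \<epsilon> \<epsilon>' :: real and C C' y y'
    assume "C \<in> \<P>" "C' \<in> \<P>" and near: "near_norm_minimizer M \<epsilon> C y" "near_norm_minimizer M \<epsilon>' C' y'"
      and "0 < \<epsilon>" "0 < \<epsilon>'"
    obtain E where "E \<in> \<P>" "E \<subseteq> C \<inter> C'"
      using directed[OF \<open>C \<in> \<P>\<close> \<open>C' \<in> \<P>\<close>] by blast
    then obtain w where "w \<in> C" "w \<in> C'" "(norm w)\<^sup>2 < M + min \<epsilon> \<epsilon>'"
      using above[OF \<open>E \<in> \<P>\<close>, of "min \<epsilon> \<epsilon>'"] \<open>0 < \<epsilon>\<close> \<open>0 < \<epsilon>'\<close> by auto
    have "norm (y - w) \<le> sqrt (8 * \<epsilon>)"
      using near(1) \<open>w \<in> C\<close> \<open>(norm w)\<^sup>2 < M + min \<epsilon> \<epsilon>'\<close> convex[OF \<open>C \<in> \<P>\<close>]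
      unfolding near_norm_minimizer_def by (intro near_minimizers_close[of C]) auto
    moreover have "norm (y' - w) \<le> sqrt (8 * \<epsilon>')"
      using near(2) \<open>w \<in> C'\<close> \<open>(norm w)\<^sup>2 < M + min \<epsilon> \<epsilon>'\<close> convex[OF \<open>C' \<in> \<P>\<close>]
      unfolding near_norm_minimizer_def by (intro near_minimizers_close[of C']) auto
    ultimately show "norm (y - y') \<le> sqrt (8 * \<epsilon>) + sqrt (8 * \<epsilon>')"
      using norm_triangle_ineq4[of "y - w" "y' - w"] by simp
  qed
qed

lemma directed_convex_family_common_closure_point:
  fixes \<P> :: "'a::{real_inner,complete_space} set set"
  assumes "\<P> \<noteq> {}" "{} \<notin> \<P>" "\<And>C. C \<in> \<P> \<Longrightarrow> convex C"
    and "\<And>C D. C \<in> \<P> \<Longrightarrow> D \<in> \<P> \<Longrightarrow> \<exists>E\<in>\<P>. E \<subseteq> C \<inter> D"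
    and "bounded (\<Union>\<P>)"
  obtains l where "\<And>C. C \<in> \<P> \<Longrightarrow> l \<in> closure C"
proof -
  obtain M where near_in: "\<And>\<epsilon> C. 0 < \<epsilon> \<Longrightarrow> C \<in> \<P> \<Longrightarrow> \<exists>C'\<in>\<P>. \<exists>w\<in>C. near_norm_minimizer M \<epsilon> C' w"
    and near_close: "\<And>\<epsilon> \<epsilon>' C C' y y'. C \<in> \<P> \<Longrightarrow> C' \<in> \<P> \<Longrightarrow> near_norm_minimizer M \<epsilon> C y \<Longrightarrow>
           near_norm_minimizer M \<epsilon>' C' y' \<Longrightarrow> 0 < \<epsilon> \<Longrightarrow> 0 < \<epsilon>' \<Longrightarrow>
           norm (y - y') \<le> sqrt (8 * \<epsilon>) + sqrt (8 * \<epsilon>')"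
    using directed_convex_family_near_norm_minimizers[OF assms] by blast
  define \<epsilon> :: "nat \<Rightarrow> real" where "\<epsilon> k = inverse (real (Suc k))" for k
  define \<delta> where "\<delta> k = sqrt (8 * \<epsilon> k)" for k
  have "0 < \<epsilon> k" for k
    by (simp add: \<epsilon>_def)
  have "\<delta> \<longlonglongrightarrow> sqrt (8 * 0)"
    unfolding \<delta>_def \<epsilon>_def by (intro tendsto_intros LIMSEQ_inverse_real_of_nat)
  then have "\<delta> \<longlonglongrightarrow> 0"
    by simp
  obtain C0 where "C0 \<in> \<P>"
    using assms(1) by blast
  obtain C y where "\<And>k. C k \<in> \<P>" and near_y: "\<And>k. near_norm_minimizer M (\<epsilon> k) (C k) (y k)"
    using near_in[OF \<open>\<And>k. 0 < \<epsilon> k\<close> \<open>C0 \<in> \<P>\<close>] by metis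
  have "Cauchy y"
    using near_close[OF \<open>\<And>k. C k \<in> \<P>\<close> \<open>\<And>k. C k \<in> \<P>\<close> near_y near_y \<open>\<And>k. 0 < \<epsilon> k\<close> \<open>\<And>k. 0 < \<epsilon> k\<close>]
      \<open>\<delta> \<longlonglongrightarrow> 0\<close>
    by (intro Cauchy_if_norm_diff_le[where \<delta> = \<delta>]) (simp add: \<delta>_def)
  then obtain l where "y \<longlonglongrightarrow> l"
    using Cauchy_convergent_iff convergent_def by blast
  show ?thesis
  proof (rule that)
    fix D assume "D \<in> \<P>"
    obtain C' w where "\<And>k. C' k \<in> \<P>" "\<And>k. w k \<in> D" and near_w: "\<And>k. near_norm_minimizer M (\<epsilon> k) (C' k) (w k)"
      using near_in[OF \<open>\<And>k. 0 < \<epsilon> k\<close> \<open>D \<in> \<P>\<close>] by metis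
    have "norm (w k - y k) \<le> \<delta> k + \<delta> k" for k
      using near_close[OF \<open>C' k \<in> \<P>\<close> \<open>C k \<in> \<P>\<close> near_w near_y \<open>0 < \<epsilon> k\<close> \<open>0 < \<epsilon> k\<close>]
      by (simp add: \<delta>_def)
    then have "\<forall>\<^sub>F k in sequentially. norm (w k - y k) \<le> \<delta> k + \<delta> k"
      by simp
    then have "(\<lambda>k. w k - y k) \<longlonglongrightarrow> 0"
      using tendsto_add_zero[OF \<open>\<delta> \<longlonglongrightarrow> 0\<close> \<open>\<delta> \<longlonglongrightarrow> 0\<close>] by (rule Lim_null_comparison)
    then have "w \<longlonglongrightarrow> l"
      using Lim_transform[OF \<open>y \<longlonglongrightarrow> l\<close>] by blast
    with \<open>\<And>k. w k \<in> D\<close> show "l \<in> closure D"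
      by (auto simp: closure_sequential)
  qed
qed

lemma closed_convex_Inter_nonempty:
  fixes \<F> :: "'a::{real_inner,complete_space} set set"
  assumes closed_convex: "\<And>S. S \<in> \<F> \<Longrightarrow> closed S \<and> convex S"
    and finite_Inter: "\<And>\<G>. finite \<G> \<Longrightarrow> \<G> \<subseteq> \<F> \<Longrightarrow> \<Inter>\<G> \<noteq> {}"
    and "B \<in> \<F>" "bounded B"
  shows "\<Inter>\<F> \<noteq> {}"
proof -
  define \<P> where "\<P> = (\<lambda>\<G>. \<Inter>(insert B \<G>)) ` {\<G>. finite \<G> \<and> \<G> \<subseteq> \<F>}"
  have "C \<noteq> {}" if "C \<in> \<P>" for C
    using that finite_Inter \<open>B \<in> \<F>\<close> unfolding \<P>_def
    by (metis (no_types, lifting) finite_insert imageE insert_subset mem_Collect_eq)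
  then have "{} \<notin> \<P>"
    by blast
  moreover have "convex C" if "C \<in> \<P>" for C
    using that closed_convex \<open>B \<in> \<F>\<close> by (auto simp: \<P>_def subset_iff intro!: convex_Int convex_Inter)
  moreover have "\<exists>E\<in>\<P>. E \<subseteq> C \<inter> D" if CD: "C \<in> \<P>" "D \<in> \<P>" for C D
  proof -
    obtain \<G> \<H> where "finite \<G>" "\<G> \<subseteq> \<F>" "C = \<Inter>(insert B \<G>)" "finite \<H>" "\<H> \<subseteq> \<F>" "D = \<Inter>(insert B \<H>)"
      using CD by (auto simp: \<P>_def)
    then show ?thesis
      by (intro bexI[of _ "\<Inter>(insert B (\<G> \<union> \<H>))"]) (auto simp: \<P>_def)
  qed
  moreover have "bounded (\<Union>\<P>)"
    using \<open>bounded B\<close> by (rule bounded_subset) (auto simp: \<P>_def)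
  moreover have "\<P> \<noteq> {}"
    by (auto simp: \<P>_def)
  ultimately obtain y where y: "\<And>C. C \<in> \<P> \<Longrightarrow> y \<in> closure C"
    using directed_convex_family_common_closure_point by blast
  have "y \<in> S" if "S \<in> \<F>" for S
  proof -
    have "y \<in> closure (B \<inter> S)"
      using y[of "\<Inter>(insert B {S})"] that by (auto simp: \<P>_def)
    also have "\<dots> \<subseteq> S"
      using closed_convex[OF that] by (simp add: closure_minimal)
    finally show ?thesis .
  qed
  then show ?thesis
    by blast
qed

lemma monotone_set_Inter_minty_cball:
  fixes G :: "('a::{real_inner,complete_space} \<times> 'a) set"
  assumes "monotone_set G"
  shows "(\<Inter>s\<in>G. cball (minty_center s) (minty_radius s)) \<noteq> {}"
proof (cases "G = {}")
  case False
  then obtain s0 where "s0 \<in> G"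
    by blast
  have finite_Inter: "\<Inter>\<G> \<noteq> {}"
    if \<G>: "finite \<G>" "\<G> \<subseteq> (\<lambda>s. cball (minty_center s) (minty_radius s)) ` G" for \<G>
  proof -
    obtain F where "F \<subseteq> G" "finite F" "\<G> = (\<lambda>s. cball (minty_center s) (minty_radius s)) ` F"
      using finite_subset_image[OF \<G>] by blast
    then show ?thesis
      using monotone_set_finite_Inter_minty_cball monotone_set_subset[OF assms] by metis
  qed
  have "cball (minty_center s0) (minty_radius s0) \<in> (\<lambda>s. cball (minty_center s) (minty_radius s)) ` G"
    using \<open>s0 \<in> G\<close> by blast
  from closed_convex_Inter_nonempty[OF _ finite_Inter this] show ?thesis
    by auto
qed simp

section \<open>Minty's theorem and the resolvent\<close>

lemma maximal_monotone_mem_if_monotonically_related: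
  assumes "maximal_monotone A" and related: "\<And>x u. u \<in> A x \<Longrightarrow> 0 \<le> (x - y) \<bullet> (u - v)"
  shows "v \<in> A y"
proof -
  define B where "B x = (if x = y then insert v (A x) else A x)" for x
  have B_cases: "u \<in> A x \<or> (x = y \<and> u = v)" if "u \<in> B x" for x u
    using that by (auto simp: B_def split: if_splits)
  have "monotone_op A"
    using assms(1) by (simp add: maximal_monotone_def)
  have "0 \<le> (x1 - x2) \<bullet> (u1 - u2)" if "u1 \<in> B x1" "u2 \<in> B x2" for x1 x2 u1 u2
  proof -
    have swap: "(x1 - x2) \<bullet> (u1 - u2) = (x2 - x1) \<bullet> (u2 - u1)"
      by (simp add: algebra_simps)
    from B_cases[OF that(1)] B_cases[OF that(2)] show ?thesis
      using \<open>monotone_op A\<close> related[of u1 x1] related[of u2 x2] swap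
      by (auto simp: monotone_op_def)
  qed
  then have "monotone_op B"
    by (simp add: monotone_op_def)
  moreover have "\<forall>x. A x \<subseteq> B x"
    by (auto simp: B_def)
  ultimately have "B = A"
    using assms(1) by (simp add: maximal_monotone_def)
  then show ?thesis
    by (metis B_def insertI1)
qed

theorem minty_surjectivity:
  fixes A :: "'a::{real_inner,complete_space} \<Rightarrow> 'a set"
  assumes "maximal_monotone A" "0 < \<gamma>"
  shows "\<exists>y. \<exists>u\<in>A y. z = y + \<gamma> *\<^sub>R u"
proof -
  have "monotone_op A"
    using assms(1) by (simp add: maximal_monotone_def)
  define G where "G = {(x, \<gamma> *\<^sub>R u - z) | x u. u \<in> A x}"
  have "monotone_set G"
  proof (unfold monotone_set_def G_def, clarsimp)
    fix x1 u1 x2 u2 assume "u1 \<in> A x1" "u2 \<in> A x2"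
    then have "0 \<le> \<gamma> * ((x1 - x2) \<bullet> (u1 - u2))"
      using \<open>monotone_op A\<close> \<open>0 < \<gamma>\<close> by (simp add: monotone_op_def)
    then show "0 \<le> (x1 - x2) \<bullet> (\<gamma> *\<^sub>R u1 - \<gamma> *\<^sub>R u2)"
      by (simp add: scaleR_diff_right[symmetric])
  qed
  then obtain y where y: "\<forall>s\<in>G. y \<in> cball (minty_center s) (minty_radius s)"
    using monotone_set_Inter_minty_cball by blast
  define v where "v = (1 / \<gamma>) *\<^sub>R (z - y)"
  have "0 \<le> (x - y) \<bullet> (u - v)" if "u \<in> A x" for x u
  proof -
    have "(x, \<gamma> *\<^sub>R u - z) \<in> G"
      using that by (auto simp: G_def)
    then have "0 \<le> (fst (x, \<gamma> *\<^sub>R u - z) - y) \<bullet> (snd (x, \<gamma> *\<^sub>R u - z) + y)"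
      using y mem_minty_cball_iff by blast
    then have "0 \<le> (x - y) \<bullet> (\<gamma> *\<^sub>R u - z + y)"
      by simp
    also have "\<gamma> *\<^sub>R u - z + y = \<gamma> *\<^sub>R (u - v)"
      using \<open>0 < \<gamma>\<close> by (simp add: v_def algebra_simps)
    finally show ?thesis
      using \<open>0 < \<gamma>\<close> by (simp add: zero_le_mult_iff)
  qed
  then have "v \<in> A y"
    by (rule maximal_monotone_mem_if_monotonically_related[OF assms(1)])
  moreover have "z = y + \<gamma> *\<^sub>R v"
    using \<open>0 < \<gamma>\<close> by (simp add: v_def)
  ultimately show ?thesis
    by blast
qed

lemma resolvent_eqI:
  assumes "monotone_op A" "0 < \<gamma>" "u \<in> A y" "x = y + \<gamma> *\<^sub>R u"
  shows "resolvent \<gamma> A x = y"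
  unfolding resolvent_def
proof (rule the_equality)
  show "\<exists>u\<in>A y. x = y + \<gamma> *\<^sub>R u"
    using assms(3,4) by blast
next
  fix y' assume "\<exists>u'\<in>A y'. x = y' + \<gamma> *\<^sub>R u'"
  then obtain u' where "u' \<in> A y'" "x = y' + \<gamma> *\<^sub>R u'"
    by blast
  then have "\<gamma> *\<^sub>R (u - u') = y' - y"
    using assms(4) by (simp add: algebra_simps)
  then have "\<gamma> * ((y - y') \<bullet> (u - u')) = - ((y - y') \<bullet> (y - y'))"
    by (metis inner_scaleR_right inner_minus_right minus_diff_eq)
  moreover have "0 \<le> (y - y') \<bullet> (u - u')"
    using assms(1,3) \<open>u' \<in> A y'\<close> by (simp add: monotone_op_def)
  ultimately have "(y - y') \<bullet> (y - y') \<le> 0"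
    using \<open>0 < \<gamma>\<close> by (smt (verit) mult_nonneg_nonneg)
  then have "(y - y') \<bullet> (y - y') = 0"
    using inner_ge_zero[of "y - y'"] by linarith
  then show "y' = y"
    by simp
qed

lemma resolvent_characterization:
  fixes A :: "'a::{real_inner,complete_space} \<Rightarrow> 'a set"
  assumes "maximal_monotone A" "0 < \<gamma>"
  shows "\<exists>u\<in>A (resolvent \<gamma> A x). x = resolvent \<gamma> A x + \<gamma> *\<^sub>R u"
proof -
  obtain y u where "u \<in> A y" "x = y + \<gamma> *\<^sub>R u"
    using minty_surjectivity[OF assms] by blast
  moreover have "monotone_op A"
    using assms(1) by (simp add: maximal_monotone_def)
  ultimately show ?thesis
    using resolvent_eqI[OF _ assms(2)] by metis
qed

lemma resolvent_nonexpansive: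
  fixes A :: "'a::{real_inner,complete_space} \<Rightarrow> 'a set"
  assumes "maximal_monotone A" "0 < \<gamma>"
  shows "norm (resolvent \<gamma> A x - resolvent \<gamma> A p) \<le> norm (x - p)"
proof -
  define d where "d = resolvent \<gamma> A x - resolvent \<gamma> A p"
  obtain u1 u2 where "u1 \<in> A (resolvent \<gamma> A x)" "x = resolvent \<gamma> A x + \<gamma> *\<^sub>R u1"
    and "u2 \<in> A (resolvent \<gamma> A p)" "p = resolvent \<gamma> A p + \<gamma> *\<^sub>R u2"
    using resolvent_characterization[OF assms] by metis
  moreover have "monotone_op A"
    using assms(1) by (simp add: maximal_monotone_def)
  ultimately have "0 \<le> d \<bullet> (u1 - u2)" "\<gamma> *\<^sub>R (u1 - u2) = (x - p) - d"
    by (auto simp: monotone_op_def d_def algebra_simps)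
  then have "d \<bullet> d \<le> d \<bullet> (x - p)"
    using \<open>0 < \<gamma>\<close> by (smt (verit) inner_diff_right inner_scaleR_right mult_nonneg_nonneg)
  also have "\<dots> \<le> norm d * norm (x - p)"
    by (rule norm_cauchy_schwarz)
  finally have "norm d * norm d \<le> norm d * norm (x - p)"
    by (simp add: power2_norm_eq_inner[symmetric] power2_eq_square)
  then show ?thesis
    unfolding d_def[symmetric] by (cases "norm d = 0") (auto simp: mult_le_cancel_left)
qed

section \<open>Iterating the resolvents\<close>

lemma nonexpansive_iterates_dist_le:
  fixes T :: "nat \<Rightarrow> 'a::real_normed_vector \<Rightarrow> 'a"
  assumes nonexp: "\<And>n a b. norm (T n a - T n b) \<le> norm (a - b)"
    and x: "\<And>n. x (Suc n) = T n (x n)"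
  shows "norm (x (n + m) - p) \<le> norm (x n - p) + (\<Sum>i=n..<n + m. norm (p - T i p))"
proof (induction m)
  case (Suc m)
  have "norm (x (n + Suc m) - p) \<le> norm (T (n + m) (x (n + m)) - T (n + m) p) + norm (p - T (n + m) p)"
    using x norm_triangle_ineq[of "T (n + m) (x (n + m)) - T (n + m) p" "T (n + m) p - p"]
    by (simp add: norm_minus_commute[of "T (n + m) p"])
  also have "\<dots> \<le> norm (x (n + m) - p) + norm (p - T (n + m) p)"
    using nonexp by simp
  also have "\<dots> \<le> norm (x n - p) + (\<Sum>i=n..<n + Suc m. norm (p - T i p))"
    using Suc.IH by simp
  finally show ?case .
qed simp

lemma AF_sum_resolvent_residuals_less:
  assumes "p \<in> AF \<gamma> A (chi n m r)" "l \<le> m"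
  shows "(\<Sum>i=n..<n + l. norm (p - resolvent (\<gamma> i) A p)) < 1 / (real r + 1)"
proof -
  define k where "k = chi n m r"
  have residual_le: "norm (p - resolvent (\<gamma> i) A p) \<le> 1 / (real k + 1)" if "i \<in> {n..<n + l}" for i
  proof -
    have "i \<le> k"
      using that assms(2) by (auto simp: k_def chi_def)
    then show ?thesis
      using assms(1) by (auto simp: AF_def k_def)
  qed
  have "(\<Sum>i=n..<n + l. norm (p - resolvent (\<gamma> i) A p)) \<le> real (card {n..<n + l}) * (1 / (real k + 1))"
    using residual_le by (rule sum_bounded_above)
  also have "\<dots> = real l / (real k + 1)"
    by simp
  also have "\<dots> < 1 / (real r + 1)"
  proof -
    have "l * (r + 1) \<le> k"
      using assms(2) mult_le_mono1[of l m "r + 1"] by (simp add: k_def chi_def)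
    then have "real l * (real r + 1) < real k + 1"
      by (metis of_nat_add of_nat_le_iff of_nat_mult of_nat_1 less_add_one order_le_less_trans)
    then show ?thesis
      by (simp add: field_simps)
  qed
  finally show ?thesis .
qed

theorem lemma8p1:
  fixes A :: "'a::{real_inner, complete_space} \<Rightarrow> 'a set"
    and \<gamma> :: "nat \<Rightarrow> real" and x :: "nat \<Rightarrow> 'a" and x0 :: 'a
  assumes "maximal_monotone A"
    and "zer A \<noteq> {}"
    and "\<And>n. \<gamma> n > 0"
    and "x 0 = x0"
    and "\<And>n. x (Suc n) = resolvent (\<gamma> n) A (x n)"
  shows "(\<forall>n m p. m \<ge> 1 \<longrightarrow>
            norm (x (n + m) - p) \<le> norm (x n - p) + (\<Sum>i = n..n + m - 1. norm (p - resolvent (\<gamma> i) A p)))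
       \<and> (\<forall>r n m. \<forall>p \<in> AF \<gamma> A (chi n m r). \<forall>l \<le> m.
            norm (x (n + l) - p) < norm (x n - p) + 1 / (real r + 1))"
proof -
  have bound: "norm (x (n + m) - p) \<le> norm (x n - p) + (\<Sum>i=n..<n + m. norm (p - resolvent (\<gamma> i) A p))"
    for n m p
    using resolvent_nonexpansive[OF assms(1,3)] assms(5) by (rule nonexpansive_iterates_dist_le)
  show ?thesis
  proof (intro conjI allI impI ballI)
    fix n m :: nat and p :: 'a
    assume "m \<ge> 1"
    then have "{n..n + m - 1} = {n..<n + m}"
      by auto
    then show "norm (x (n + m) - p) \<le> norm (x n - p) + (\<Sum>i = n..n + m - 1. norm (p - resolvent (\<gamma> i) A p))"
      using bound by simp
  next
    fix r n m l :: nat and p :: 'a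
    assume "p \<in> AF \<gamma> A (chi n m r)" "l \<le> m"
    from AF_sum_resolvent_residuals_less[OF this] show "norm (x (n + l) - p) < norm (x n - p) + 1 / (real r + 1)"
      using bound[of n l p] by linarith
  qed
qed

end
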